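(* Let $f:\mathbb{R}\to\mathbb{C}\setminus\{0\}$ be entire on $\mathbb{R}$ and let $g:\mathbb{R}\to\mathbb{C}$ be continuous with $\exp(g(x))=f(x)$ for all $x$. Then $g$ is entire on $\mathbb{R}$ if and only if the complex extension $f_c$ of $f$ does not vanish on $\mathbb{C}$.
   Context: A function $f:\mathbb{R}\to\mathbb{C}$ is entire on $\mathbb{R}$ if it equals a power series with infinite radius of convergence on $\mathbb{R}$. Its complex extension is $f_c(z)=\sum_{k\ge0}\frac{f^{(k)}(0)}{k!}z^k$, $z\in\mathbb{C}$. *)

theory Defs
  imports "HOL-Analysis.Analysis"
begin

definition entire_on_R :: "(real \<Rightarrow> complex) \<Rightarrow> bool" where
  "entire_on_R f \<longleftrightarrow> (\<exists>a::nat \<Rightarrow> complex. \<forall>x::real. (\<lambda>k. a k * (complex_of_real x) ^ k) sums f x)"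

definition nth_vderiv :: "nat \<Rightarrow> (real \<Rightarrow> complex) \<Rightarrow> real \<Rightarrow> complex" where
  "nth_vderiv k f = ((\<lambda>g x. vector_derivative g (at x)) ^^ k) f"

definition complex_ext :: "(real \<Rightarrow> complex) \<Rightarrow> complex \<Rightarrow> complex" where
  "complex_ext f z = (\<Sum>k. nth_vderiv k f 0 / of_nat (fact k) * z ^ k)"

end

theory Submission
  imports Defs "HOL-Complex_Analysis.Complex_Analysis"
begin

text \<open>A power series converging on all of \<open>\<real>\<close> has infinite radius of convergence, so \<open>f\<close> is
  entire on \<open>\<real>\<close> iff it is the restriction of an entire function \<open>F\<close>, and then \<open>f\<^sub>c = F\<close>.
  If \<open>g = G\<close> on \<open>\<real>\<close> with \<open>G\<close> entire, then \<open>F = exp \<circ> G\<close> on \<open>\<real>\<close>, hence on \<open>\<complex>\<close> by the identity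
  theorem, so \<open>F\<close> has no zeros. Conversely a zero-free entire \<open>F\<close> has an entire logarithm \<open>H\<close>
  (\<open>\<complex>\<close> is simply connected); \<open>g\<close> and \<open>H\<close> restricted to \<open>\<real>\<close> are continuous logarithms of \<open>f\<close>
  on the connected set \<open>\<real>\<close>, so they differ by a constant in \<open>2\<pi>i\<int>\<close>, and \<open>g\<close> is entire.\<close>

lemma entire_on_R_holomorphic_extension:
  assumes "entire_on_R f"
  obtains F where "F holomorphic_on UNIV" "\<And>x. F (of_real x) = f x"
proof -
  obtain a where a: "\<And>x. (\<lambda>k. a k * (complex_of_real x) ^ k) sums f x"
    using assms unfolding entire_on_R_def by blast
  have "conv_radius a \<ge> \<infinity>"
    by (rule conv_radius_geI_ex') (use a sums_summable in blast)
  then have "ereal (norm z) < conv_radius a" for z :: complex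
    by (cases "conv_radius a") auto
  then have "(\<lambda>z. \<Sum>n. a n * z ^ n) holomorphic_on UNIV"
    unfolding holomorphic_on_def field_differentiable_def
    using has_field_derivative_powser by blast
  moreover have "(\<Sum>n. a n * (of_real x) ^ n) = f x" for x
    using a sums_unique by metis
  ultimately show ?thesis
    using that by blast
qed

lemma entire_on_R_holomorphic_restriction:
  assumes "F holomorphic_on UNIV"
  shows "entire_on_R (\<lambda>x. F (of_real x))"
  unfolding entire_on_R_def
proof (intro exI allI)
  fix x :: real
  have "(\<lambda>n. (deriv ^^ n) F 0 / fact n * (of_real x - 0) ^ n) sums F (of_real x)"
    by (rule holomorphic_power_series[where r = "norm (complex_of_real x) + 1"])
       (use assms holomorphic_on_subset in auto)
  then show "(\<lambda>k. (deriv ^^ k) F 0 / fact k * complex_of_real x ^ k) sums F (of_real x)"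
    by simp
qed

lemma nth_vderiv_holomorphic_restriction:
  assumes "F holomorphic_on UNIV"
  shows "nth_vderiv k (\<lambda>x. F (of_real x)) = (\<lambda>x. (deriv ^^ k) F (of_real x))"
proof (induction k)
  case 0
  then show ?case
    by (simp add: nth_vderiv_def)
next
  case (Suc k)
  have "vector_derivative (\<lambda>x. (deriv ^^ k) F (of_real x)) (at x) = (deriv ^^ Suc k) F (of_real x)"
    for x :: real
  proof -
    have "(deriv ^^ k) F holomorphic_on UNIV"
      using assms by (intro holomorphic_higher_deriv) auto
    then have "((deriv ^^ k) F has_field_derivative (deriv ^^ Suc k) F (of_real x)) (at (of_real x))"
      by (auto intro: holomorphic_derivI[of _ UNIV])
    then have "((\<lambda>x. (deriv ^^ k) F (of_real x)) has_vector_derivative (deriv ^^ Suc k) F (of_real x)) (at x)"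
      by (rule has_vector_derivative_real_field)
    then show ?thesis
      by (simp add: vector_derivative_at)
  qed
  with Suc show ?case
    by (simp add: nth_vderiv_def)
qed

lemma complex_ext_eq_holomorphic_extension:
  assumes "F holomorphic_on UNIV" "\<And>x. F (of_real x) = f x"
  shows "complex_ext f = F"
proof
  fix z
  have f_eq: "f = (\<lambda>x. F (of_real x))"
    using assms(2) by auto
  have "(\<lambda>n. (deriv ^^ n) F 0 / fact n * (z - 0) ^ n) sums F z"
    by (rule holomorphic_power_series[where r = "norm z + 1"])
       (use assms holomorphic_on_subset in auto)
  then have "(\<lambda>n. nth_vderiv n f 0 / of_nat (fact n) * z ^ n) sums F z"
    unfolding f_eq nth_vderiv_holomorphic_restriction[OF assms(1)] by simp
  then show "complex_ext f z = F z"
    unfolding complex_ext_def by (rule sums_unique[symmetric])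
qed

lemma holomorphic_eq_if_eq_on_reals:
  assumes "F holomorphic_on UNIV" "G holomorphic_on UNIV"
    and "\<And>x. F (of_real x) = G (of_real x)"
  shows "F z = G z"
proof -
  have reals_limpt: "0 islimpt range complex_of_real"
    unfolding islimpt_approachable
  proof (intro allI impI)
    fix e :: real
    assume "e > 0"
    then show "\<exists>x'\<in>range complex_of_real. x' \<noteq> 0 \<and> dist x' 0 < e"
      by (intro bexI[of _ "of_real (e / 2)"] rangeI) auto
  qed
  have "(\<lambda>z. F z - G z) holomorphic_on UNIV"
    using assms by (intro holomorphic_intros)
  then have "F z - G z = 0"
    by (rule analytic_continuation[OF _ _ _ _ _ reals_limpt]) (use assms(3) in auto)
  then show ?thesis
    by simp
qed

text \<open>The difference of two continuous logarithms lies in \<open>2\<pi>i\<int>\<close>, so its distinct values are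
  \<open>2\<pi>\<close> apart, and a continuous function with such a discrete range is constant on a connected set.\<close>

lemma continuous_logs_differ_by_constant:
  fixes g h :: "'a::topological_space \<Rightarrow> complex"
  assumes "connected S" "continuous_on S g" "continuous_on S h"
    and "\<And>x. x \<in> S \<Longrightarrow> exp (g x) = exp (h x)"
  obtains c where "\<And>x. x \<in> S \<Longrightarrow> g x = h x + c"
proof -
  have "(\<lambda>x. g x - h x) constant_on S"
  proof (rule continuous_discrete_range_constant[OF assms(1)])
    show "continuous_on S (\<lambda>x. g x - h x)"
      using assms(2,3) by (intro continuous_intros)
    show "\<exists>e>0. \<forall>y. y \<in> S \<and> g y - h y \<noteq> g x - h x \<longrightarrow> e \<le> norm (g y - h y - (g x - h x))"
      if "x \<in> S" for x
    proof (intro exI[of _ "2 * pi"] conjI allI impI)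
      fix y
      assume y: "y \<in> S \<and> g y - h y \<noteq> g x - h x"
      have "exp (g y - h y) = exp (g x - h x)"
        using assms(4) y \<open>x \<in> S\<close> by (simp add: exp_diff)
      with y have "\<not> \<bar>Im (g y - h y) - Im (g x - h x)\<bar> < 2 * pi"
        using exp_complex_eqI by blast
      then show "2 * pi \<le> norm (g y - h y - (g x - h x))"
        using abs_Im_le_cmod[of "g y - h y - (g x - h x)"] by simp
    qed simp
  qed
  then show ?thesis
    using that by (auto simp: constant_on_def algebra_simps)
qed

lemma entire_on_R_continuous_log_of_entire:
  assumes "H holomorphic_on UNIV" "continuous_on UNIV g"
    and "\<And>x. exp (g x) = exp (H (of_real x))"
  shows "entire_on_R g"
proof -
  have "continuous_on UNIV (\<lambda>x::real. H (of_real x))"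
    by (intro continuous_on_compose2[OF holomorphic_on_imp_continuous_on[OF assms(1)]]
        continuous_intros) auto
  then obtain c where "\<And>x. g x = H (of_real x) + c"
    by (rule continuous_logs_differ_by_constant[OF connected_UNIV assms(2) _ assms(3)]) auto
  then have "g = (\<lambda>x. H (of_real x) + c)"
    by blast
  moreover have "entire_on_R (\<lambda>x. H (of_real x) + c)"
    using assms(1) by (intro entire_on_R_holomorphic_restriction holomorphic_intros)
  ultimately show ?thesis
    by simp
qed

theorem lemmaB3:
  fixes f g :: "real \<Rightarrow> complex"
  assumes "entire_on_R f"
    and "\<forall>x. f x \<noteq> 0"
    and "continuous_on UNIV g"
    and "\<forall>x. exp (g x) = f x"
  shows "entire_on_R g \<longleftrightarrow> (\<forall>z. complex_ext f z \<noteq> 0)"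
proof -
  obtain F where F: "F holomorphic_on UNIV" "\<And>x. F (of_real x) = f x"
    using entire_on_R_holomorphic_extension[OF assms(1)] by blast
  have f_ext: "complex_ext f = F"
    using complex_ext_eq_holomorphic_extension[OF F] .
  show ?thesis
  proof
    assume "entire_on_R g"
    then obtain G where G: "G holomorphic_on UNIV" "\<And>x. G (of_real x) = g x"
      using entire_on_R_holomorphic_extension by blast
    have "(\<lambda>z. exp (G z)) holomorphic_on UNIV"
      using G(1) by (intro holomorphic_intros)
    then have "F z = exp (G z)" for z
      using holomorphic_eq_if_eq_on_reals[OF F(1), of "\<lambda>z. exp (G z)"] F(2) G(2) assms(4)
      by simp
    then show "\<forall>z. complex_ext f z \<noteq> 0"
      by (simp add: f_ext)
  next
    assume "\<forall>z. complex_ext f z \<noteq> 0"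
    then have F_nonzero: "F z \<noteq> 0" if "z \<in> UNIV" for z
      by (simp add: f_ext)
    obtain H where H: "H holomorphic_on UNIV" "\<And>z. F z = exp (H z)"
      using contractible_imp_holomorphic_log[OF F(1) contractible_UNIV F_nonzero] by auto
    show "entire_on_R g"
      by (rule entire_on_R_continuous_log_of_entire[OF H(1) assms(3)])
        (use assms(4) F(2) H(2) in simp)
  qed
qed

end
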